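(* Let $q\ge2$ be an integer and define $F(y)=\ln\!\Big(\frac{(1-y)^q+(1+y)^q}{2}\Big)$ for $y\in[0,1]$, and $G(z)=\ln F(e^z)$ for $z\in(-\infty,0]$. Then $G$ is concave on $(-\infty,0]$. Consequently, for all $0\le\epsilon\le\tfrac12$ and all $0<x\le1$, \[ F\big((1-2\epsilon)x\big)\cdot F(1) ~\le~ F(1-2\epsilon)\cdot F(x). \]
   Context: Note $F(y)>0$ for $0<y\le1$, so $G$ is well defined on $(-\infty,0]$. *)

theory Defs
  imports "HOL-Analysis.Analysis"
begin

definition F :: "nat \<Rightarrow> real \<Rightarrow> real" where
  "F q y = ln (((1 - y) ^ q + (1 + y) ^ q) / 2)"

definition G :: "nat \<Rightarrow> real \<Rightarrow> real" where
  "G q z = ln (F q (exp z))"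

end

(*
  Write P(y) = ((1 - y)^q + (1 + y)^q) / 2, so F = ln \<circ> P and G'(z) = \<phi>(exp z) with
  \<phi>(y) = y (ln P)'(y) / ln P(y). Concavity of G means that \<phi> decreases on (0,1]. Numerator and
  denominator of \<phi> vanish at 0, so by the monotone form of L'Hopital's rule it suffices that the
  quotient of their derivatives decreases. With n = q - 1 and r = (1 - y)/(1 + y) this quotient is
    (1 + r^n) / ((1 + r^n) + y (1 - r^n)) * (1 + n / D(r)),   D(r) = \<Sum>k<n. cosh ((n - 1 - 2k) ln r),
  and both factors decrease in y because r decreases. The inequality is the superadditivity
  G(a + b) + G(0) \<le> G(a) + G(b) of the concave G, at a = ln (1 - 2\<epsilon>) and b = ln x.
*)

theory Submission
  imports Defs
begin

section \<open>A monotone form of L'Hopital's rule\<close>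

lemma isCont_if_deriv_on_Ioc:
  fixes f f' :: "real \<Rightarrow> real"
  assumes "isCont f a" "\<And>t. a < t \<Longrightarrow> t \<le> x \<Longrightarrow> (f has_real_derivative f' t) (at t)"
    and "a \<le> t" "t \<le> x"
  shows "isCont f t"
  using assms(1) assms(2)[of t, THEN DERIV_isCont] assms(3,4) by (cases "t = a") auto

lemma pos_if_deriv_pos:
  fixes g g' :: "real \<Rightarrow> real"
  assumes "a < x" "g a = 0" "isCont g a"
    and g: "\<And>t. a < t \<Longrightarrow> t \<le> x \<Longrightarrow> (g has_real_derivative g' t) (at t)"
    and g'_pos: "\<And>t. a < t \<Longrightarrow> t \<le> x \<Longrightarrow> g' t > 0"
  shows "g x > 0"
proof -
  have "g a < g x"
  proof (rule DERIV_pos_imp_increasing_open[OF \<open>a < x\<close>])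
    show "\<exists>y. (g has_real_derivative y) (at t) \<and> 0 < y" if "a < t" "t < x" for t
      using g g'_pos that by force
    show "continuous_on {a..x} g"
      using isCont_if_deriv_on_Ioc[OF \<open>isCont g a\<close> g]
      by (intro continuous_at_imp_continuous_on) auto
  qed
  then show ?thesis using \<open>g a = 0\<close> by simp
qed

lemma deriv_quotient_le_quotient:
  fixes f g f' g' :: "real \<Rightarrow> real"
  assumes "a < x" "f a = 0" "g a = 0" "isCont f a" "isCont g a"
    and f: "\<And>t. a < t \<Longrightarrow> t \<le> x \<Longrightarrow> (f has_real_derivative f' t) (at t)"
    and g: "\<And>t. a < t \<Longrightarrow> t \<le> x \<Longrightarrow> (g has_real_derivative g' t) (at t)"
    and g'_pos: "\<And>t. a < t \<Longrightarrow> t \<le> x \<Longrightarrow> g' t > 0"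
    and le: "\<And>t. a < t \<Longrightarrow> t < x \<Longrightarrow> f' x / g' x \<le> f' t / g' t"
  shows "f' x / g' x \<le> f x / g x"
proof -
  have "\<exists>c. a < c \<and> c < x \<and> (f x - f a) * g' c = (g x - g a) * f' c"
  proof (rule GMVT'[OF \<open>a < x\<close>])
    show "isCont f t" "isCont g t" if "a \<le> t" "t \<le> x" for t
      using isCont_if_deriv_on_Ioc[OF \<open>isCont f a\<close> f that]
        isCont_if_deriv_on_Ioc[OF \<open>isCont g a\<close> g that] by simp_all
  qed (use f g in auto)
  then obtain c where c: "a < c" "c < x" and eq: "f x * g' c = g x * f' c"
    using \<open>f a = 0\<close> \<open>g a = 0\<close> by auto
  have "g x > 0"
    using pos_if_deriv_pos[OF \<open>a < x\<close> \<open>g a = 0\<close> \<open>isCont g a\<close> g g'_pos] by simp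
  then have "f x / g x = f' c / g' c"
    using eq g'_pos[of c] c by (simp add: field_simps)
  then show ?thesis using le c by simp
qed

lemma lhopital_antimono_on:
  fixes f g f' g' :: "real \<Rightarrow> real"
  assumes "f a = 0" "g a = 0" "isCont f a" "isCont g a"
    and f: "\<And>t. a < t \<Longrightarrow> t \<le> b \<Longrightarrow> (f has_real_derivative f' t) (at t)"
    and g: "\<And>t. a < t \<Longrightarrow> t \<le> b \<Longrightarrow> (g has_real_derivative g' t) (at t)"
    and g'_pos: "\<And>t. a < t \<Longrightarrow> t \<le> b \<Longrightarrow> g' t > 0"
    and "\<And>s t. a < s \<Longrightarrow> s \<le> t \<Longrightarrow> t < b \<Longrightarrow> f' t / g' t \<le> f' s / g' s"
  shows "antimono_on {a<..b} (\<lambda>x. f x / g x)"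
proof (rule monotone_onI)
  have g_pos: "g x > 0" if "a < x" "x \<le> b" for x
    by (rule pos_if_deriv_pos[OF \<open>a < x\<close> \<open>g a = 0\<close> \<open>isCont g a\<close> g g'_pos]) (use that in auto)
  have quotient_deriv: "((\<lambda>x. f x / g x) has_real_derivative
      (f' x * g x - f x * g' x) / (g x * g x)) (at x)" if "a < x" "x \<le> b" for x
    using f g g_pos[OF that] that by (intro DERIV_divide) auto
  fix u v assume uv: "u \<in> {a<..b}" "v \<in> {a<..b}" "u \<le> v"
  show "f v / g v \<le> f u / g u"
  proof (rule DERIV_nonpos_imp_decreasing_open[OF \<open>u \<le> v\<close>])
    fix x assume x: "u < x" "x < v"
    have "f' x / g' x \<le> f x / g x"
    proof (rule deriv_quotient_le_quotient[where f = f and g = g])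
      show "a < x" using x uv by simp
    qed (use x uv assms in auto)
    then have "f' x * g x - f x * g' x \<le> 0"
      using g_pos[of x] g'_pos[of x] x uv by (simp add: field_simps)
    then show "\<exists>y. ((\<lambda>x. f x / g x) has_real_derivative y) (at x) \<and> y \<le> 0"
      using quotient_deriv[of x] x uv by (intro exI conjI) (auto intro: divide_nonpos_nonneg)
  next
    show "continuous_on {u..v} (\<lambda>x. f x / g x)"
    proof (intro continuous_at_imp_continuous_on ballI)
      fix x assume "x \<in> {u..v}"
      then show "isCont (\<lambda>x. f x / g x) x"
        using uv quotient_deriv[of x, THEN DERIV_isCont] by simp
    qed
  qed
qed

section \<open>The polynomial P and its elasticity\<close>

definition P :: "nat \<Rightarrow> real \<Rightarrow> real" where
  "P n y = ((1 - y) ^ Suc n + (1 + y) ^ Suc n) / 2"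

definition dP :: "nat \<Rightarrow> real \<Rightarrow> real" where
  "dP n y = real (Suc n) * ((1 + y) ^ n - (1 - y) ^ n) / 2"

definition d2P :: "nat \<Rightarrow> real \<Rightarrow> real" where
  "d2P n y = real (Suc n) * real n * ((1 + y) ^ (n - 1) + (1 - y) ^ (n - 1)) / 2"

definition elas :: "nat \<Rightarrow> real \<Rightarrow> real" where
  "elas n y = y * dP n y / P n y"

lemma P_deriv: "(P n has_real_derivative dP n y) (at y)"
  unfolding P_def dP_def
  by (auto intro!: derivative_eq_intros simp del: power_Suc of_nat_Suc simp: field_simps)

lemma dP_deriv: "(dP n has_real_derivative d2P n y) (at y)"
  unfolding dP_def d2P_def
  by (auto intro!: derivative_eq_intros simp del: power_Suc of_nat_Suc simp: field_simps)

lemma dP_pos: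
  assumes "n \<ge> 1" "0 < y" "y \<le> 1"
  shows "dP n y > 0"
proof -
  have "(1 - y) ^ n < (1 + y) ^ n" using assms by (intro power_strict_mono) auto
  then show ?thesis unfolding dP_def by simp
qed

lemma P_0 [simp]: "P n 0 = 1"
  unfolding P_def by simp

lemma P_gt_1:
  assumes "n \<ge> 1" "0 < y" "y \<le> 1"
  shows "P n y > 1"
proof -
  have "P n y - 1 > 0"
  proof (rule pos_if_deriv_pos[where g = "\<lambda>t. P n t - 1" and g' = "dP n"])
    show "((\<lambda>t. P n t - 1) has_real_derivative dP n t) (at t)" for t
      using DERIV_diff[OF P_deriv DERIV_const] by simp
    show "isCont (\<lambda>t. P n t - 1) 0"
      using DERIV_diff[OF P_deriv DERIV_const] by (rule DERIV_isCont)
  qed (use assms dP_pos in auto)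
  then show ?thesis by simp
qed

lemma F_Suc_eq: "F (Suc n) y = ln (P n y)"
  unfolding F_def P_def by simp

lemma ln_P_deriv:
  assumes "P n y > 0"
  shows "((\<lambda>t. ln (P n t)) has_real_derivative dP n y / P n y) (at y)"
  by (auto intro!: derivative_eq_intros P_deriv simp: assms)

lemma elas_deriv:
  assumes "P n y \<noteq> 0"
  shows "(elas n has_real_derivative (dP n y + y * d2P n y - elas n y * dP n y) / P n y) (at y)"
  unfolding elas_def[abs_def]
  by (auto intro!: derivative_eq_intros P_deriv dP_deriv simp: assms field_simps power2_eq_square)

lemma elas_deriv_div_ln_P_deriv_eq:
  assumes "P n y \<noteq> 0" "dP n y \<noteq> 0"
  shows "(dP n y + y * d2P n y - elas n y * dP n y) / P n y / (dP n y / P n y)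
      = 1 + y * d2P n y / dP n y - elas n y"
  using assms unfolding elas_def by (simp add: field_simps)

section \<open>The closed form of the L'Hopital quotient\<close>

definition D :: "nat \<Rightarrow> real \<Rightarrow> real" where
  "D n r = (\<Sum>k<n. (r\<^sup>2) ^ k) / r ^ (n - 1)"

lemma D_eq_cosh_sum:
  assumes "r > 0" "n \<ge> 1"
  shows "D n r = (\<Sum>k<n. cosh ((real n - 1 - 2 * real k) * ln r))"
proof -
  define m where "m k = real n - 1 - 2 * real k" for k
  have power_ratio_eq: "(r\<^sup>2) ^ k / r ^ (n - 1) = exp (- (m k * ln r))" if "k < n" for k
  proof -
    have exp_ln: "exp (real j * ln r) = r ^ j" for j
      using \<open>r > 0\<close> by (simp add: exp_of_nat_mult)
    have "(r\<^sup>2) ^ k / r ^ (n - 1) = exp (real (2 * k) * ln r) / exp (real (n - 1) * ln r)"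
      unfolding exp_ln by (simp add: power_mult)
    also have "\<dots> = exp (- (m k * ln r))"
      using that unfolding m_def by (simp add: of_nat_diff algebra_simps flip: exp_diff)
    finally show ?thesis .
  qed
  have D_exp: "D n r = (\<Sum>k<n. exp (- (m k * ln r)))"
    unfolding D_def sum_divide_distrib using power_ratio_eq by (intro sum.cong) auto
  have "(\<Sum>k<n. exp (m k * ln r)) = (\<Sum>k<n. exp (m (n - Suc k) * ln r))"
    by (rule sum.nat_diff_reindex[symmetric])
  also have "\<dots> = (\<Sum>k<n. exp (- (m k * ln r)))"
    unfolding m_def by (intro sum.cong) (auto simp: of_nat_diff algebra_simps)
  finally show ?thesis
    unfolding cosh_field_def sum_divide_distrib[symmetric] sum.distrib D_exp m_def by simp
qed

lemma D_pos:
  assumes "r > 0" "n \<ge> 1"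
  shows "D n r > 0"
  unfolding D_def using assms by (intro divide_pos_pos sum_pos) (auto simp: lessThan_empty_iff)

lemma D_antimono:
  assumes "0 < s" "s \<le> t" "t \<le> 1" "n \<ge> 1"
  shows "D n t \<le> D n s"
proof -
  have "t > 0" using assms by simp
  have "\<bar>m * ln t\<bar> \<le> \<bar>m * ln s\<bar>" for m :: real
    using assms by (simp add: abs_mult mult_left_mono)
  then have "cosh (m * ln t) \<le> cosh (m * ln s)" for m :: real
    by (metis cosh_real_abs cosh_real_nonneg_le_iff abs_ge_zero)
  then show ?thesis
    unfolding D_eq_cosh_sum[OF \<open>0 < s\<close> \<open>n \<ge> 1\<close>] D_eq_cosh_sum[OF \<open>0 < t\<close> \<open>n \<ge> 1\<close>]
    by (intro sum_mono)
qed

definition deriv_ratio :: "nat \<Rightarrow> real \<Rightarrow> real" where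
  "deriv_ratio n y =
    (let r = (1 - y) / (1 + y) in (1 + r ^ n) / ((1 + r ^ n) + y * (1 - r ^ n)) * (1 + n / D n r))"

lemma deriv_ratio_identity:
  fixes y \<rho> n :: real
  assumes "0 < y" "y < 1" "0 \<le> \<rho>" "\<rho> < 1"
  shows "1 + n * y * (1 / (1 + y) + \<rho> / (1 - y)) / (1 - \<rho>)
           - (n + 1) * y * (1 - \<rho>) / ((1 + \<rho>) + y * (1 - \<rho>))
       = (1 + \<rho>) / ((1 + \<rho>) + y * (1 - \<rho>))
           * (1 + n * (4 * y * \<rho> / ((1 + y) * (1 - y) * (1 - \<rho>\<^sup>2))))"
proof -
  have "(1 + \<rho>) + y * (1 - \<rho>) > 0" using assms by (intro add_pos_nonneg) auto
  moreover have "1 - \<rho>\<^sup>2 = (1 - \<rho>) * (1 + \<rho>)" by (simp add: algebra_simps power2_eq_square)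
  ultimately show ?thesis
    using assms by (simp add: divide_simps) (simp add: algebra_simps)
qed

lemma inverse_D_eq:
  assumes "0 < y" "y < 1" "n \<ge> 1"
  defines "r \<equiv> (1 - y) / (1 + y)"
  shows "4 * y * r ^ n / ((1 + y) * (1 - y) * (1 - (r ^ n)\<^sup>2)) = 1 / D n r"
proof -
  define S where "S = (\<Sum>k<n. (r\<^sup>2) ^ k)"
  have "r > 0" unfolding r_def using assms by simp
  have "S > 0" unfolding S_def using \<open>n \<ge> 1\<close> \<open>r > 0\<close> by (intro sum_pos) (auto simp: lessThan_empty_iff)
  have geometric: "1 - (r ^ n)\<^sup>2 = (1 - r\<^sup>2) * S"
    unfolding S_def by (metis one_diff_power_eq power_mult mult.commute)
  have "(1 + y) * (1 - y) * (1 - r\<^sup>2) = 4 * y * r"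
    unfolding r_def using assms by (simp add: divide_simps power2_eq_square) (simp add: algebra_simps)
  then have "(1 + y) * (1 - y) * (1 - (r ^ n)\<^sup>2) = 4 * y * r * S"
    unfolding geometric by (metis mult.assoc)
  moreover have "r ^ n = r * r ^ (n - 1)" using \<open>n \<ge> 1\<close> by (cases n) auto
  ultimately show ?thesis
    unfolding D_def S_def[symmetric] using \<open>0 < y\<close> \<open>r > 0\<close> by simp
qed

lemma elas_deriv_div_ln_P_deriv:
  assumes "n \<ge> 1" "0 < y" "y < 1"
  shows "(dP n y + y * d2P n y - elas n y * dP n y) / P n y / (dP n y / P n y) = deriv_ratio n y"
proof -
  define r where "r = (1 - y) / (1 + y)"
  define \<rho> where "\<rho> = r ^ n"
  define a where "a = (1 + y) ^ n / 2"
  define W where "W = (1 + \<rho>) + y * (1 - \<rho>)"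
  define X where "X = 1 / (1 + y) + \<rho> / (1 - y)"
  have "a > 0" "0 < r" "r < 1" unfolding a_def r_def using assms by auto
  then have "0 \<le> \<rho>" "\<rho> < 1" unfolding \<rho>_def using \<open>n \<ge> 1\<close> by (simp_all add: power_less_one_iff)
  then have "W > 0" unfolding W_def using \<open>0 < y\<close> by (intro add_pos_nonneg) auto
  have minus_pow: "(1 - y) ^ n = \<rho> * (1 + y) ^ n"
    unfolding \<rho>_def r_def using assms by (simp add: power_divide)
  have P: "P n y = a * W"
    unfolding P_def power_Suc minus_pow a_def W_def by (simp add: algebra_simps)
  have dP: "dP n y = (real n + 1) * a * (1 - \<rho>)"
    unfolding dP_def minus_pow a_def by (simp add: algebra_simps)
  have d2P: "d2P n y = (real n + 1) * a * (n * X)"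
  proof -
    obtain m where n: "n = Suc m" using \<open>n \<ge> 1\<close> by (cases n) auto
    have "(1 + y) ^ (n - 1) = (1 + y) ^ n / (1 + y)"
      unfolding n using assms by simp
    moreover have "(1 - y) ^ (n - 1) = (1 - y) ^ n / (1 - y)"
      unfolding n using assms by simp
    ultimately show ?thesis
      unfolding d2P_def a_def X_def minus_pow by (simp add: algebra_simps add_divide_distrib)
  qed
  have "P n y > 0" "dP n y > 0" using P_gt_1 dP_pos assms by fastforce+
  then have "(dP n y + y * d2P n y - elas n y * dP n y) / P n y / (dP n y / P n y)
      = 1 + y * d2P n y / dP n y - elas n y"
    by (intro elas_deriv_div_ln_P_deriv_eq) auto
  also have "\<dots> = 1 + n * y * X / (1 - \<rho>) - (real n + 1) * y * (1 - \<rho>) / W"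
  proof -
    have "(real n + 1) * a \<noteq> 0" using \<open>a > 0\<close> by simp
    then have "y * d2P n y / dP n y = n * y * X / (1 - \<rho>)"
      unfolding d2P dP by (metis mult_divide_mult_cancel_left_if mult.left_commute mult.assoc)
    moreover have "elas n y = (real n + 1) * y * (1 - \<rho>) / W"
      unfolding elas_def P dP using \<open>a > 0\<close> by (simp add: ac_simps)
    ultimately show ?thesis by simp
  qed
  also have "\<dots> = (1 + \<rho>) / W * (1 + n * (4 * y * \<rho> / ((1 + y) * (1 - y) * (1 - \<rho>\<^sup>2))))"
    unfolding W_def X_def by (rule deriv_ratio_identity) fact+
  also have "\<dots> = deriv_ratio n y"
    unfolding deriv_ratio_def Let_def W_def \<rho>_def r_def
      inverse_D_eq[OF \<open>0 < y\<close> \<open>y < 1\<close> \<open>n \<ge> 1\<close>] by simp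
  finally show ?thesis .
qed

lemma deriv_ratio_antimono:
  assumes "n \<ge> 1" "0 < s" "s \<le> t" "t < 1"
  shows "deriv_ratio n t \<le> deriv_ratio n s"
proof -
  define r\<^sub>s r\<^sub>t where "r\<^sub>s = (1 - s) / (1 + s)" and "r\<^sub>t = (1 - t) / (1 + t)"
  have r: "0 < r\<^sub>t" "r\<^sub>t \<le> r\<^sub>s" "r\<^sub>s \<le> 1"
    unfolding r\<^sub>s_def r\<^sub>t_def using assms by (auto simp: divide_simps algebra_simps)
  define \<rho>\<^sub>s \<rho>\<^sub>t where "\<rho>\<^sub>s = r\<^sub>s ^ n" and "\<rho>\<^sub>t = r\<^sub>t ^ n"
  have \<rho>: "0 \<le> \<rho>\<^sub>t" "\<rho>\<^sub>t \<le> \<rho>\<^sub>s" "\<rho>\<^sub>s \<le> 1"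
    unfolding \<rho>\<^sub>s_def \<rho>\<^sub>t_def using r by (auto intro: power_mono power_le_one)
  have first: "(1 + \<rho>\<^sub>t) / ((1 + \<rho>\<^sub>t) + t * (1 - \<rho>\<^sub>t)) \<le> (1 + \<rho>\<^sub>s) / ((1 + \<rho>\<^sub>s) + s * (1 - \<rho>\<^sub>s))"
  proof -
    have "s * ((1 - \<rho>\<^sub>s) * (1 + \<rho>\<^sub>t)) \<le> t * ((1 - \<rho>\<^sub>t) * (1 + \<rho>\<^sub>s))"
    proof (rule mult_mono)
      show "(1 - \<rho>\<^sub>s) * (1 + \<rho>\<^sub>t) \<le> (1 - \<rho>\<^sub>t) * (1 + \<rho>\<^sub>s)"
        using \<rho> by (simp add: algebra_simps)
    qed (use assms \<rho> in auto)
    moreover have "(1 + \<rho>\<^sub>s) + s * (1 - \<rho>\<^sub>s) > 0" "(1 + \<rho>\<^sub>t) + t * (1 - \<rho>\<^sub>t) > 0"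
      using assms \<rho> by (auto intro!: add_pos_nonneg)
    ultimately show ?thesis by (simp add: divide_simps algebra_simps)
  qed
  have second: "1 + n / D n r\<^sub>t \<le> 1 + n / D n r\<^sub>s"
    using D_antimono[OF r \<open>n \<ge> 1\<close>] D_pos[of r\<^sub>s n] r \<open>n \<ge> 1\<close> by (simp add: frac_le)
  have "deriv_ratio n t = (1 + \<rho>\<^sub>t) / ((1 + \<rho>\<^sub>t) + t * (1 - \<rho>\<^sub>t)) * (1 + n / D n r\<^sub>t)"
    unfolding deriv_ratio_def Let_def \<rho>\<^sub>t_def r\<^sub>t_def ..
  also have "\<dots> \<le> (1 + \<rho>\<^sub>s) / ((1 + \<rho>\<^sub>s) + s * (1 - \<rho>\<^sub>s)) * (1 + n / D n r\<^sub>s)"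
    using first second \<rho> assms D_pos[of r\<^sub>t n] r by (intro mult_mono) auto
  also have "\<dots> = deriv_ratio n s"
    unfolding deriv_ratio_def Let_def \<rho>\<^sub>s_def r\<^sub>s_def ..
  finally show ?thesis .
qed

section \<open>Concave functions on the negative half-line\<close>

lemma concave_on_nonpos_superadd:
  fixes g :: "real \<Rightarrow> real"
  assumes g: "concave_on {..0} g" and "a \<le> 0" "b \<le> 0"
  shows "g (a + b) + g 0 \<le> g a + g b"
proof (cases "a + b = 0")
  case True
  then have "a = 0" "b = 0" using assms by linarith+
  then show ?thesis by simp
next
  case False
  define s where "s = a + b"
  have s: "s < 0" using False assms unfolding s_def by simp
  define k where "k = (g 0 - g s) / (0 - s)"
  have "concave_on {s..0} g" using g unfolding concave_on_def by (rule convex_on_subset) auto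
  then have chord: "g c \<ge> k * (c - s) + g s" if "c \<in> {s..0}" for c
    using concave_onD_Icc' that unfolding k_def by fastforce
  have "k * (- s) = g 0 - g s" unfolding k_def using s by simp
  then show ?thesis
    using chord[of a] chord[of b] assms unfolding s_def by (auto simp: algebra_simps)
qed

lemma mult_le_mult_if_concave_ln_comp_exp:
  fixes f :: "real \<Rightarrow> real"
  assumes concave: "concave_on {..0} (\<lambda>z. ln (f (exp z)))"
    and f_pos: "\<And>y. 0 < y \<Longrightarrow> y \<le> 1 \<Longrightarrow> f y > 0"
    and "0 < s" "s \<le> 1" "0 < x" "x \<le> 1"
  shows "f (s * x) * f 1 \<le> f s * f x"
proof -
  have pos: "f (s * x) > 0" "f 1 > 0" "f s > 0" "f x > 0"
    using assms f_pos by (simp_all add: mult_le_one)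
  have "ln (f (exp (ln s + ln x))) + ln (f (exp 0)) \<le> ln (f (exp (ln s))) + ln (f (exp (ln x)))"
    using concave_on_nonpos_superadd[OF concave, of "ln s" "ln x"] assms by simp
  then have "ln (f (s * x) * f 1) \<le> ln (f s * f x)"
    using \<open>0 < s\<close> \<open>0 < x\<close> pos by (simp add: exp_add ln_mult)
  then show ?thesis using pos by simp
qed

lemma elas_div_ln_P_antimono:
  assumes "n \<ge> 1"
  shows "antimono_on {0<..1} (\<lambda>y. elas n y / ln (P n y))"
proof (rule lhopital_antimono_on[where f' = "\<lambda>y. (dP n y + y * d2P n y - elas n y * dP n y) / P n y"
      and g' = "\<lambda>y. dP n y / P n y"])
  show "elas n 0 = 0" "ln (P n 0) = 0" by (simp_all add: elas_def)
  show "isCont (elas n) 0" using elas_deriv[of n 0] by (simp add: DERIV_isCont)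
  show "isCont (\<lambda>t. ln (P n t)) 0" using ln_P_deriv[of n 0] by (simp add: DERIV_isCont)
  fix t :: real assume t: "0 < t" "t \<le> 1"
  then have "P n t > 0" using P_gt_1[OF assms] by fastforce
  then show "(elas n has_real_derivative (dP n t + t * d2P n t - elas n t * dP n t) / P n t) (at t)"
    and "((\<lambda>t. ln (P n t)) has_real_derivative dP n t / P n t) (at t)"
    and "dP n t / P n t > 0"
    using elas_deriv ln_P_deriv dP_pos[OF assms t] by auto
next
  fix s t :: real assume "0 < s" "s \<le> t" "t < 1"
  then show "(dP n t + t * d2P n t - elas n t * dP n t) / P n t / (dP n t / P n t)
      \<le> (dP n s + s * d2P n s - elas n s * dP n s) / P n s / (dP n s / P n s)"
    using elas_deriv_div_ln_P_deriv[OF assms] deriv_ratio_antimono[OF assms] by simp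
qed

lemma G_Suc_deriv:
  assumes "n \<ge> 1" "z \<le> 0"
  shows "(G (Suc n) has_real_derivative elas n (exp z) / ln (P n (exp z))) (at z)"
proof -
  have "P n (exp z) > 1" using P_gt_1 assms by simp
  then have "((\<lambda>z. ln (ln (P n (exp z)))) has_real_derivative
      1 / ln (P n (exp z)) * (dP n (exp z) / P n (exp z) * exp z)) (at z)"
    by (intro DERIV_chain2[of ln] DERIV_ln_divide[THEN DERIV_cong]
        DERIV_chain2[of "\<lambda>t. ln (P n t)"] ln_P_deriv DERIV_exp) auto
  then show ?thesis
    unfolding G_def F_Suc_eq elas_def by (simp add: ac_simps)
qed

lemma G_Suc_concave:
  assumes "n \<ge> 1"
  shows "concave_on {..0} (G (Suc n))"
  unfolding concave_on_def
proof (rule convex_on_realI[where f' = "\<lambda>z. - (elas n (exp z) / ln (P n (exp z)))"])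
  show "((\<lambda>x. - G (Suc n) x) has_real_derivative - (elas n (exp z) / ln (P n (exp z)))) (at z)"
    if "z \<in> {..0}" for z
    using G_Suc_deriv[OF assms, of z] that by (auto intro: DERIV_minus)
  show "- (elas n (exp x) / ln (P n (exp x))) \<le> - (elas n (exp y) / ln (P n (exp y)))"
    if "x \<in> {..0}" "y \<in> {..0}" "x \<le> y" for x y
    using elas_div_ln_P_antimono[OF assms] that by (simp add: monotone_on_def)
qed simp

theorem mainTheorem4:
  fixes q :: nat
  assumes "q \<ge> 2"
  shows "concave_on {..0} (G q) \<and>
    (\<forall>\<epsilon> x :: real. 0 \<le> \<epsilon> \<and> \<epsilon> \<le> 1/2 \<and> 0 < x \<and> x \<le> 1 \<longrightarrow>
       F q ((1 - 2*\<epsilon>) * x) * F q 1 \<le> F q (1 - 2*\<epsilon>) * F q x)"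
proof -
  obtain n where q: "q = Suc n" and "n \<ge> 1" using assms by (cases q) auto
  have concave: "concave_on {..0} (G q)"
    unfolding q using G_Suc_concave[OF \<open>n \<ge> 1\<close>] .
  have F_pos: "F q y > 0" if "0 < y" "y \<le> 1" for y
    unfolding q F_Suc_eq using P_gt_1[OF \<open>n \<ge> 1\<close> that] by simp
  have "F q ((1 - 2*\<epsilon>) * x) * F q 1 \<le> F q (1 - 2*\<epsilon>) * F q x"
    if "0 \<le> \<epsilon>" "\<epsilon> \<le> 1/2" "0 < x" "x \<le> 1" for \<epsilon> x :: real
  proof (cases "\<epsilon> = 1/2")
    case True
    then have "1 - 2 * \<epsilon> = 0" by simp
    then show ?thesis by (simp add: F_def)
  next
    case False
    with that concave F_pos show ?thesis
      by (intro mult_le_mult_if_concave_ln_comp_exp) (auto simp: G_def[abs_def])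
  qed
  with concave show ?thesis by blast
qed

end
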